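(* Let $\lambda_1,\lambda_2\in\mathbb{N}$. For all $(k,l,m)$ with $0\le m\le\lambda_1$, $0\le l\le\lambda_2$, $0\le k\le\lambda_2+m-l$, writing $v_{k,l,m}=F_2^k\hat F_3^lF_1^mv_\lambda\in V_\lambda$ (this notation is used for all $k,l,m\in\mathbb{N}$; such vectors may be zero), we have: (i) $K_1v_{k,l,m}=q^{\lambda_1+k-l-2m}v_{k,l,m}$; (ii) $K_2v_{k,l,m}=q^{\lambda_2-2k-l+m}v_{k,l,m}$; (iii) $F_1v_{k,l,m}=a_k(l,m)v_{k,l,m+1}+b_k(l,m)v_{k-1,l+1,m}$; (iv) $E_1v_{k,l,m}=\alpha_k(l,m)v_{k,l,m-1}+\beta_k(l,m)v_{k+1,l-1,m}$; (v) $F_2v_{k,l,m}=v_{k+1,l,m}$; (vi) $E_2v_{k,l,m}=\eta_k(l,m)v_{k-1,l,m}$; where (terms with a zero coefficient are omitted, so negative indices never matter) $a_k(l,m)=\frac{q^{\lambda_2+m+1-k-l}-q^{-\lambda_2-m-1+k+l}}{q^{\lambda_2+m+1-l}-q^{-\lambda_2-m-1+l}}$, $b_k(l,m)=\frac{q^k-q^{-k}}{q^{\lambda_2+m+1-l}-q^{-\lambda_2-m-1+l}}$, $\eta_k(l,m)=\frac{q^k-q^{-k}}{q-q^{-1}}\cdot\frac{q^{1-k+\lambda_2-l+m}-q^{k-1-\lambda_2+l-m}}{q-q^{-1}}$, $\alpha_k(l,m)=\frac{(q^m-q^{-m})(q^{\lambda_1-m+1}-q^{-\lambda_1+m-1})(q^{\lambda_2+m+1}-q^{-\lambda_2-m-1})}{(q-q^{-1})^2(q^{\lambda_2+m-l+1}-q^{-\lambda_2-m+l-1})}$,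 $\beta_k(l,m)=\frac{(q^l-q^{-l})(q^{\lambda_2-l+1}-q^{-\lambda_2+l-1})(q^{\lambda_1+\lambda_2-l+2}-q^{-\lambda_1-\lambda_2+l-2})}{(q-q^{-1})^2(q^{\lambda_2+m-l+1}-q^{-\lambda_2-m+l-1})}$.
   Context: Fix $0<q<1$. $\mathcal{U}_q(\mathfrak{su}(3))$ denotes the unital associative $\mathbb{C}$-algebra generated by $E_i,F_i,K_i^{\pm1}$ ($i=1,2$) subject to: the $K_i^{\pm1}$ pairwise commute, $K_iK_i^{-1}=K_i^{-1}K_i=1$, $K_iE_j=q^{a_{ij}}E_jK_i$, $K_iF_j=q^{-a_{ij}}F_jK_i$, $E_iF_j-F_jE_i=\delta_{ij}\frac{K_i-K_i^{-1}}{q-q^{-1}}$, where $a_{11}=a_{22}=2$, $a_{12}=a_{21}=-1$, and for $i\neq j$ the quantum Serre relations $E_i^2E_j-(q+q^{-1})E_iE_jE_i+E_jE_i^2=0=F_i^2F_j-(q+q^{-1})F_iF_jF_i+F_jF_i^2$. Define $\hat F_3=F_1F_2\frac{qK_2-q^{-1}K_2^{-1}}{q-q^{-1}}-F_2F_1\frac{K_2-K_2^{-1}}{q-q^{-1}}$. For $\lambda_1,\lambda_2\in\mathbb{N}=\{0,1,2,\dots\}$, $V_\lambda$ denotes the finite-dimensional irreducible representation of $\mathcal{U}_q(\mathfrak{su}(3))$ generated by a highest weight vector $v_\lambda$ with $E_iv_\lambda=0$, $K_iv_\lambda=q^{\lambda_i}v_\lambda$ ($i=1,2$). The vectors $F_2^k\hat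 F_3^lF_1^mv_\lambda$ with $0\le m\le\lambda_1$, $0\le l\le\lambda_2$, $0\le k\le\lambda_2+m-l$ form a basis of $V_\lambda$. *)

theory Defs
  imports Complex_Main
begin

text \<open>The generators are
  indexed by i in {1,2}: E i, F i, K i and Ki i (= K_i^{-1}).\<close>

definition cartan :: "nat \<Rightarrow> nat \<Rightarrow> int" where
  "cartan i j = (if i = j then 2 else -1)"

definition Uq_su3_rep ::
  "real \<Rightarrow> (complex \<Rightarrow> 'v::ab_group_add \<Rightarrow> 'v) \<Rightarrow> (nat \<Rightarrow> 'v \<Rightarrow> 'v) \<Rightarrow> (nat \<Rightarrow> 'v \<Rightarrow> 'v)
     \<Rightarrow> (nat \<Rightarrow> 'v \<Rightarrow> 'v) \<Rightarrow> (nat \<Rightarrow> 'v \<Rightarrow> 'v) \<Rightarrow> bool" where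
  "Uq_su3_rep q sc E F K Ki \<longleftrightarrow>
     vector_space sc \<and>
     (\<forall>i\<in>{1,2}. Vector_Spaces.linear sc sc (E i) \<and> Vector_Spaces.linear sc sc (F i) \<and>
                 Vector_Spaces.linear sc sc (K i) \<and> Vector_Spaces.linear sc sc (Ki i)) \<and>
     (\<forall>i\<in>{1,2}. \<forall>j\<in>{1,2}. \<forall>x.
        K i (K j x) = K j (K i x) \<and> K i (Ki j x) = Ki j (K i x) \<and> Ki i (Ki j x) = Ki j (Ki i x) \<and>
        K i (Ki i x) = x \<and> Ki i (K i x) = x \<and>
        K i (E j x) = sc (complex_of_real q powi cartan i j) (E j (K i x)) \<and>
        K i (F j x) = sc (complex_of_real q powi (- cartan i j)) (F j (K i x)) \<and>
        E i (F j x) - F j (E i x) =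
          (if i = j then sc (1 / complex_of_real (q - inverse q)) (K i x - Ki i x) else 0) \<and>
        (i \<noteq> j \<longrightarrow>
           E i (E i (E j x)) - sc (complex_of_real (q + inverse q)) (E i (E j (E i x)))
             + E j (E i (E i x)) = 0 \<and>
           F i (F i (F j x)) - sc (complex_of_real (q + inverse q)) (F i (F j (F i x)))
             + F j (F i (F i x)) = 0))"

definition fin_dim :: "(complex \<Rightarrow> 'v::ab_group_add \<Rightarrow> 'v) \<Rightarrow> bool" where
  "fin_dim sc \<longleftrightarrow> (\<exists>B. finite B \<and> module.span sc B = UNIV)"

definition irreducible_rep ::
  "(complex \<Rightarrow> 'v::ab_group_add \<Rightarrow> 'v) \<Rightarrow> (nat \<Rightarrow> 'v \<Rightarrow> 'v) \<Rightarrow> (nat \<Rightarrow> 'v \<Rightarrow> 'v)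
     \<Rightarrow> (nat \<Rightarrow> 'v \<Rightarrow> 'v) \<Rightarrow> (nat \<Rightarrow> 'v \<Rightarrow> 'v) \<Rightarrow> bool" where
  "irreducible_rep sc E F K Ki \<longleftrightarrow>
     (\<forall>W. module.subspace sc W \<and>
          (\<forall>i\<in>{1,2}. \<forall>x\<in>W. E i x \<in> W \<and> F i x \<in> W \<and> K i x \<in> W \<and> Ki i x \<in> W)
          \<longrightarrow> W = {0} \<or> W = UNIV)"

definition F3hat ::
  "real \<Rightarrow> (complex \<Rightarrow> 'v::ab_group_add \<Rightarrow> 'v) \<Rightarrow> (nat \<Rightarrow> 'v \<Rightarrow> 'v) \<Rightarrow> (nat \<Rightarrow> 'v \<Rightarrow> 'v)
     \<Rightarrow> (nat \<Rightarrow> 'v \<Rightarrow> 'v) \<Rightarrow> 'v \<Rightarrow> 'v" where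
  "F3hat q sc F K Ki x =
     F 1 (F 2 (sc (1 / complex_of_real (q - inverse q))
                 (sc (complex_of_real q) (K 2 x) - sc (complex_of_real (inverse q)) (Ki 2 x))))
     - F 2 (F 1 (sc (1 / complex_of_real (q - inverse q)) (K 2 x - Ki 2 x)))"

definition vkl ::
  "real \<Rightarrow> (complex \<Rightarrow> 'v::ab_group_add \<Rightarrow> 'v) \<Rightarrow> (nat \<Rightarrow> 'v \<Rightarrow> 'v) \<Rightarrow> (nat \<Rightarrow> 'v \<Rightarrow> 'v)
     \<Rightarrow> (nat \<Rightarrow> 'v \<Rightarrow> 'v) \<Rightarrow> 'v \<Rightarrow> nat \<Rightarrow> nat \<Rightarrow> nat \<Rightarrow> 'v" where
  "vkl q sc F K Ki v k l m = (F 2 ^^ k) ((F3hat q sc F K Ki ^^ l) ((F 1 ^^ m) v))"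

definition qd :: "real \<Rightarrow> int \<Rightarrow> real" where
  "qd q n = q powi n - q powi (- n)"

definition coef_a :: "real \<Rightarrow> nat \<Rightarrow> nat \<Rightarrow> nat \<Rightarrow> nat \<Rightarrow> nat \<Rightarrow> real" where
  "coef_a q l1 l2 k l m =
     qd q (int l2 + int m + 1 - int k - int l) / qd q (int l2 + int m + 1 - int l)"

definition coef_b :: "real \<Rightarrow> nat \<Rightarrow> nat \<Rightarrow> nat \<Rightarrow> nat \<Rightarrow> nat \<Rightarrow> real" where
  "coef_b q l1 l2 k l m = qd q (int k) / qd q (int l2 + int m + 1 - int l)"

definition coef_eta :: "real \<Rightarrow> nat \<Rightarrow> nat \<Rightarrow> nat \<Rightarrow> nat \<Rightarrow> nat \<Rightarrow> real" where
  "coef_eta q l1 l2 k l m =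
     qd q (int k) / (q - inverse q) * (qd q (1 - int k + int l2 - int l + int m) / (q - inverse q))"

definition coef_alpha :: "real \<Rightarrow> nat \<Rightarrow> nat \<Rightarrow> nat \<Rightarrow> nat \<Rightarrow> nat \<Rightarrow> real" where
  "coef_alpha q l1 l2 k l m =
     (qd q (int m) * qd q (int l1 - int m + 1) * qd q (int l2 + int m + 1)) /
     ((q - inverse q)^2 * qd q (int l2 + int m - int l + 1))"

definition coef_beta :: "real \<Rightarrow> nat \<Rightarrow> nat \<Rightarrow> nat \<Rightarrow> nat \<Rightarrow> nat \<Rightarrow> real" where
  "coef_beta q l1 l2 k l m =
     (qd q (int l) * qd q (int l2 - int l + 1) * qd q (int l1 + int l2 - int l + 2)) /
     ((q - inverse q)^2 * qd q (int l2 + int m - int l + 1))"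

end

theory Submission
  imports Defs
begin

text \<open>Write v(l,m) = F3^l F1^m v, so that v(k,l,m) = F2^k v(l,m).  On a vector on which K2 acts
  by q^b, F3 acts as [b+1] F1 F2 - [b] F2 F1.  Together with the Serre relations this makes F1
  commute with F3, so F1 v(l,m) = v(l,m+1), and it lets F1 be moved through F2^k at the cost
  of a single F3, which gives (iii).  E2 kills every v(l,m), so (vi) is the U_q(sl(2))
  computation along the F2-string.  E1 commutes with F2, so (iv) reduces to E1 v(l,m), which
  follows by induction on l from E1 F3 x = [a+b+1] F2 x + (F3 at weight b)(E1 x): the
  coefficients alpha and beta are the solutions of the resulting recurrences.\<close>

declare One_nat_def [simp del]

section \<open>Quantum integers\<close>

definition qint :: "real \<Rightarrow> int \<Rightarrow> real" where
  "qint q n = qd q n / (q - inverse q)"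

lemma qd_0 [simp]: "qd q 0 = 0"
  unfolding qd_def by simp

lemma qint_0 [simp]: "qint q 0 = 0"
  unfolding qint_def by simp

lemma coef_alpha_0 [simp]: "coef_alpha q l1 l2 k l 0 = 0"
  unfolding coef_alpha_def by simp

lemma coef_beta_0 [simp]: "coef_beta q l1 l2 k 0 m = 0"
  unfolding coef_beta_def by simp

lemma qd_1: "qd q 1 = q - inverse q"
  unfolding qd_def by (simp add: power_int_minus)

lemma qint_eq_qd_div: "qint q n = qd q n / qd q 1"
  unfolding qint_def qd_1 ..

lemma qd_nonzero:
  assumes "0 < q" "q \<noteq> 1" "n \<noteq> 0"
  shows "qd q n \<noteq> 0"
proof -
  have "q powi n \<noteq> q powi (- n)"
  proof (cases "q < 1")
    case True
    then show ?thesis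
      using assms power_int_strict_decreasing[of n "- n" q] power_int_strict_decreasing[of "- n" n q]
      by (cases "n < 0") auto
  next
    case False
    then have "1 < q" using assms(2) by simp
    then show ?thesis
      using assms power_int_strict_increasing[of n "- n" q] power_int_strict_increasing[of "- n" n q]
      by (cases "n < 0") auto
  qed
  then show ?thesis unfolding qd_def by simp
qed

context
  fixes q :: real
  assumes q_nonzero: "q \<noteq> 0"
begin

lemma qd_recurrence: "qd q (n + 2) = (q + inverse q) * qd q (n + 1) - qd q n"
  unfolding qd_def using q_nonzero
  by (simp add: power_int_add power_int_diff power_int_minus field_simps; algebra)

lemma qd_succ: "qd q (n + 1) = q powi (- n) * qd q 1 + q * qd q n"
  unfolding qd_def using q_nonzero
  by (simp add: power_int_add power_int_diff power_int_minus field_simps; algebra)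

lemma qd_add: "qd q (a + b + 1) * qd q 1 = qd q (a + 1) * qd q (b + 1) - qd q a * qd q b"
  unfolding qd_def using q_nonzero
  by (simp add: power_int_add power_int_diff power_int_minus field_simps; algebra)

lemma qd_diff:
  "qd q (c - n) * qd q 1 = q powi n * qd q c * qd q 1 - qd q n * (q * qd q c - qd q (c - 1))"
  unfolding qd_def using q_nonzero
  by (simp add: power_int_add power_int_diff power_int_minus field_simps; algebra)

lemma qd_sl2:
  "qd q (j + 2) * qd q (a - j - 1) = qd q (j + 1) * qd q (a - j) + qd q (a - 2 * j - 2) * qd q 1"
  unfolding qd_def using q_nonzero
  by (simp add: power_int_add power_int_diff power_int_minus power_int_mult field_simps; algebra)

lemma qd_square: "qd q (b + 1) * qd q (b - 1) - qd q b * qd q b = - qd q 1 * qd q 1"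
  unfolding qd_def using q_nonzero
  by (simp add: power_int_add power_int_diff power_int_minus field_simps; algebra)

lemma qd_coef_beta_recurrence:
  fixes L N l m :: int
  defines "a \<equiv> L - l - 2 * m" and "b \<equiv> N - l + m"
  shows "qd q (a + b + 1) * qd q b * qd q (b + 1) * qd q 1
           - qd q m * qd q (L - m + 1) * qd q (N + m + 1) * qd q 1
           + qd q l * qd q (N - l + 1) * qd q (L + N - l + 2) * qd q b
         = qd q (l + 1) * qd q (N - l) * qd q (L + N - l + 1) * qd q (b + 1)"
  unfolding qd_def a_def b_def using q_nonzero
  by (simp add: power_int_add power_int_diff power_int_minus power_int_mult field_simps) algebra

end

locale generic_q =
  fixes q :: real
  assumes q_pos: "0 < q" and q_ne_1: "q \<noteq> 1"
begin

lemma q_nonzero: "q \<noteq> 0"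
  using q_pos by simp

lemma qd_1_nonzero: "qd q 1 \<noteq> 0"
  using qd_nonzero[OF q_pos q_ne_1] by simp

lemma qint_nonzero: "n \<noteq> 0 \<Longrightarrow> qint q n \<noteq> 0"
  unfolding qint_eq_qd_div using qd_nonzero[OF q_pos q_ne_1] by simp

lemma qint_1 [simp]: "qint q 1 = 1"
  using qd_1_nonzero unfolding qint_eq_qd_div by simp

lemma qint_succ: "qint q (n + 1) = q powi (- n) + q * qint q n"
  using qd_succ[OF q_nonzero, of n] qd_1_nonzero unfolding qint_eq_qd_div by (simp add: field_simps)

lemma qint_recurrence: "qint q (n + 2) = (q + inverse q) * qint q (n + 1) - qint q n"
  using qd_recurrence[OF q_nonzero] unfolding qint_def by (simp add: diff_divide_distrib)

lemma qint_2: "qint q 2 = q + inverse q"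
  using qint_recurrence[of 0] by simp

lemma qint_add: "qint q (a + b + 1) = qint q (a + 1) * qint q (b + 1) - qint q a * qint q b"
  using qd_add[OF q_nonzero, of a b] qd_1_nonzero unfolding qint_eq_qd_div by (simp add: field_simps)

lemma qint_diff:
  "qint q (c - n) = q powi n * qint q c - qint q n * (q * qint q c - qint q (c - 1))"
  using qd_diff[OF q_nonzero, of c n] qd_1_nonzero unfolding qint_eq_qd_div by (simp add: field_simps)

lemma qint_sl2:
  "qint q (j + 2) * qint q (a - j - 1) = qint q (j + 1) * qint q (a - j) + qint q (a - 2 * j - 2)"
  using qd_sl2[OF q_nonzero, of j a] qd_1_nonzero unfolding qint_eq_qd_div by (simp add: field_simps)

lemma qint_square: "qint q (b + 1) * qint q (b - 1) - qint q b * qint q b = -1"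
  using qd_square[OF q_nonzero, of b] qd_1_nonzero unfolding qint_eq_qd_div by (simp add: field_simps)

lemma coef_alpha_base: "coef_alpha q l1 l2 k 0 (Suc j) = qint q (int j + 1) * qint q (int l1 - int j)"
proof -
  have "qd q (int l2 + int (Suc j) + 1) \<noteq> 0" by (rule qd_nonzero[OF q_pos q_ne_1]) simp
  moreover have "int l1 - int (Suc j) + 1 = int l1 - int j" "int (Suc j) = int j + 1" by simp_all
  ultimately show ?thesis
    unfolding coef_alpha_def qint_eq_qd_div qd_1[symmetric] using qd_1_nonzero
    by (simp add: field_simps power2_eq_square)
qed

lemma coef_alpha_Suc:
  assumes "l < l2"
  shows "coef_alpha q l1 l2 k (Suc l) m
           = coef_alpha q l1 l2 k l m * (qint q (int l2 - int l + int m + 1) / qint q (int l2 - int l + int m))"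
proof -
  have "qd q (int l2 - int l + int m) \<noteq> 0" "qd q (int l2 - int l + int m + 1) \<noteq> 0"
    using assms by (auto intro!: qd_nonzero[OF q_pos q_ne_1])
  moreover have "int l2 + int m - int (Suc l) + 1 = int l2 - int l + int m"
    "int l2 + int m - int l + 1 = int l2 - int l + int m + 1" by simp_all
  ultimately show ?thesis
    unfolding coef_alpha_def qint_eq_qd_div qd_1[symmetric] using qd_1_nonzero by (simp add: field_simps)
qed

lemma coef_beta_Suc:
  fixes l1 l2 k l m :: nat
  assumes "l < l2"
  defines "a \<equiv> int l1 - int l - 2 * int m" and "b \<equiv> int l2 - int l + int m"
  shows "coef_beta q l1 l2 k (Suc l) m
           = qint q (a + b + 1) - coef_alpha q l1 l2 k l m / qint q b + coef_beta q l1 l2 k l m"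
proof -
  have nz: "qd q b \<noteq> 0" "qd q (b + 1) \<noteq> 0"
    unfolding b_def using assms(1) by (auto intro!: qd_nonzero[OF q_pos q_ne_1])
  have e: "int l2 + int m - (int l + 1) + 1 = b" "int l2 + int m - int l + 1 = b + 1"
    "int (Suc l) = int l + 1" "int l2 - (int l + 1) + 1 = int l2 - int l"
    "int l1 + int l2 - (int l + 1) + 2 = int l1 + int l2 - int l + 1"
    unfolding b_def by simp_all
  have S: "qd q (a + b + 1) * qd q b * qd q (b + 1) * qd q 1
           - qd q (int m) * qd q (int l1 - int m + 1) * qd q (int l2 + int m + 1) * qd q 1
           + qd q (int l) * qd q (int l2 - int l + 1) * qd q (int l1 + int l2 - int l + 2) * qd q b
         = qd q (int l + 1) * qd q (int l2 - int l) * qd q (int l1 + int l2 - int l + 1) * qd q (b + 1)"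
    using qd_coef_beta_recurrence[OF q_nonzero, of "int l1" "int l" "int m" "int l2"]
    unfolding a_def b_def by simp
  show ?thesis
    unfolding coef_alpha_def coef_beta_def qint_eq_qd_div e qd_1[symmetric]
    using nz qd_1_nonzero S by (simp add: field_simps power2_eq_square; algebra)
qed

end

section \<open>Representations of \<open>U\<^sub>q(su(3))\<close>\<close>

locale Uq_su3_module = generic_q +
  fixes sc :: "complex \<Rightarrow> 'v::ab_group_add \<Rightarrow> 'v" and E F K Ki :: "nat \<Rightarrow> 'v \<Rightarrow> 'v"
  assumes rep: "Uq_su3_rep q sc E F K Ki"
begin

sublocale vector_space sc
  using rep unfolding Uq_su3_rep_def by auto

definition rscale :: "real \<Rightarrow> 'v \<Rightarrow> 'v" where
  "rscale r x = sc (complex_of_real r) x"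

lemma sc_of_real: "sc (complex_of_real r) x = rscale r x"
  unfolding rscale_def ..

lemma sc_divide_of_real: "sc (1 / complex_of_real r) x = rscale (1 / r) x"
  unfolding rscale_def by simp

lemma rscale_simps:
  "rscale (a + b) x = rscale a x + rscale b x" "rscale (a - b) x = rscale a x - rscale b x"
  "rscale a (x + y) = rscale a x + rscale a y" "rscale a (x - y) = rscale a x - rscale a y"
  "rscale a (rscale b x) = rscale (a * b) x" "rscale (- a) x = - rscale a x"
  "rscale 1 x = x" "rscale 0 x = 0" "rscale a 0 = 0"
  unfolding rscale_def
  by (simp_all add: scale_left_distrib scale_left_diff_distrib scale_right_distrib scale_right_diff_distrib)

lemma linear_map_simps:
  assumes "Vector_Spaces.linear sc sc f"
  shows "f (x + y) = f x + f y" "f (x - y) = f x - f y" "f (rscale a x) = rscale a (f x)" "f 0 = 0"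
proof -
  have f: "module_hom sc sc f"
    using assms by (simp add: Vector_Spaces.linear_def)
  show "f (x + y) = f x + f y" "f (x - y) = f x - f y" "f (rscale a x) = rscale a (f x)" "f 0 = 0"
    unfolding rscale_def using module_hom.add[OF f] module_hom.diff[OF f] module_hom.scale[OF f]
      module_hom.zero[OF f] by auto
qed

lemma linear_generators:
  assumes "i \<in> {1, 2}"
  shows "Vector_Spaces.linear sc sc (E i)" "Vector_Spaces.linear sc sc (F i)"
    "Vector_Spaces.linear sc sc (K i)" "Vector_Spaces.linear sc sc (Ki i)"
  using rep assms unfolding Uq_su3_rep_def by blast+

lemmas generator_simps =
  linear_map_simps[OF linear_generators(1)] linear_map_simps[OF linear_generators(2)]
  linear_map_simps[OF linear_generators(3)] linear_map_simps[OF linear_generators(4)]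

lemma F_pow_simps:
  assumes "i \<in> {1, 2}"
  shows "(F i ^^ k) (x + y) = (F i ^^ k) x + (F i ^^ k) y"
    "(F i ^^ k) (x - y) = (F i ^^ k) x - (F i ^^ k) y"
    "(F i ^^ k) (rscale a x) = rscale a ((F i ^^ k) x)"
  using assms by (induction k) (simp_all add: generator_simps)

lemma relations:
  assumes "i \<in> {1, 2}" "j \<in> {1, 2}"
  shows "Ki i (K i x) = x"
    "K i (F j x) = sc (complex_of_real q powi (- cartan i j)) (F j (K i x))"
    "E i (F j x) - F j (E i x) =
       (if i = j then sc (1 / complex_of_real (q - inverse q)) (K i x - Ki i x) else 0)"
    "i \<noteq> j \<Longrightarrow> F i (F i (F j x)) - sc (complex_of_real (q + inverse q)) (F i (F j (F i x)))
       + F j (F i (F i x)) = 0"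
  using rep assms unfolding Uq_su3_rep_def by blast+

lemma K_F: "i \<in> {1, 2} \<Longrightarrow> j \<in> {1, 2} \<Longrightarrow> K i (F j x) = rscale (q powi (- cartan i j)) (F j (K i x))"
  using relations(2)[of i j x] unfolding rscale_def by (simp flip: of_real_power_int)

lemma E_F_commute: "i \<in> {1, 2} \<Longrightarrow> j \<in> {1, 2} \<Longrightarrow> i \<noteq> j \<Longrightarrow> E i (F j x) = F j (E i x)"
  using relations(3)[of i j x] by simp

lemma E_F_pow_commute: "i \<in> {1, 2} \<Longrightarrow> j \<in> {1, 2} \<Longrightarrow> i \<noteq> j \<Longrightarrow> E i ((F j ^^ k) x) = (F j ^^ k) (E i x)"
  by (induction k) (simp_all add: E_F_commute)

lemma F_serre:
  "i \<in> {1, 2} \<Longrightarrow> j \<in> {1, 2} \<Longrightarrow> i \<noteq> j \<Longrightarrow>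
     F i (F i (F j x)) = rscale (q + inverse q) (F i (F j (F i x))) - F j (F i (F i x))"
  using relations(4)[of i j x] unfolding rscale_def by (simp add: algebra_simps eq_diff_eq)

definition K_eigen :: "nat \<Rightarrow> 'v \<Rightarrow> int \<Rightarrow> bool" where
  "K_eigen i x c \<longleftrightarrow> K i x = rscale (q powi c) x"

definition weight :: "'v \<Rightarrow> int \<Rightarrow> int \<Rightarrow> bool" where
  "weight x a b \<longleftrightarrow> K_eigen 1 x a \<and> K_eigen 2 x b"

lemma K_eigen_F:
  assumes "i \<in> {1, 2}" "j \<in> {1, 2}" "K_eigen i x c"
  shows "K_eigen i (F j x) (c - cartan i j)"
  using assms K_F[of i j x] q_nonzero unfolding K_eigen_def
  by (simp add: generator_simps rscale_simps power_int_diff power_int_minus field_simps)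

lemma Ki_eigen:
  assumes "i \<in> {1, 2}" "K_eigen i x c"
  shows "Ki i x = rscale (q powi (- c)) x"
proof -
  have x: "x = rscale (q powi c) (Ki i x)"
    using relations(1)[OF assms(1,1), of x] assms unfolding K_eigen_def by (simp add: generator_simps)
  have "rscale (q powi (- c)) x = rscale (q powi (- c) * q powi c) (Ki i x)"
    using arg_cong[OF x, of "rscale (q powi (- c))"] by (simp only: rscale_simps)
  then show ?thesis using q_nonzero by (simp add: power_int_minus rscale_simps)
qed

lemma E_F_eigen:
  assumes "i \<in> {1, 2}" "K_eigen i x c"
  shows "E i (F i x) = F i (E i x) + rscale (qint q c) x"
proof -
  have "E i (F i x) = F i (E i x) + rscale (1 / (q - inverse q)) (rscale (q powi c) x - rscale (q powi (- c)) x)"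
    using relations(3)[OF assms(1,1), of x] Ki_eigen[OF assms] assms
    unfolding K_eigen_def rscale_def by (simp add: algebra_simps)
  then show ?thesis
    unfolding qint_def qd_def by (simp add: rscale_simps diff_divide_distrib)
qed

lemma K_eigen_F_pow: "i \<in> {1, 2} \<Longrightarrow> K_eigen i x c \<Longrightarrow> K_eigen i ((F i ^^ n) x) (c - 2 * int n)"
proof (induction n)
  case (Suc n)
  then show ?case using K_eigen_F[OF Suc.prems(1,1) Suc.IH[OF Suc.prems]]
    by (simp add: cartan_def algebra_simps)
qed simp

lemma E_F_pow_Suc:
  assumes "i \<in> {1, 2}" "K_eigen i u c" "E i u = 0"
  shows "E i ((F i ^^ Suc n) u) = rscale (qint q (int n + 1) * qint q (c - int n)) ((F i ^^ n) u)"
proof (induction n)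
  case 0
  then show ?case using E_F_eigen[OF assms(1,2)] assms(1,3) by (simp add: generator_simps)
next
  case (Suc n)
  have coef: "qint q (int (Suc n) + 1) * qint q (c - int (Suc n))
      = qint q (int n + 1) * qint q (c - int n) + qint q (c - 2 * int (Suc n))"
    using qint_sl2[of "int n" c] by (simp add: algebra_simps)
  have "E i ((F i ^^ Suc (Suc n)) u) = E i (F i ((F i ^^ Suc n) u))"
    by simp
  also have "\<dots> = F i (E i ((F i ^^ Suc n) u)) + rscale (qint q (c - 2 * int (Suc n))) ((F i ^^ Suc n) u)"
    by (rule E_F_eigen[OF assms(1) K_eigen_F_pow[OF assms(1,2)]])
  also have "\<dots> = rscale (qint q (int (Suc n) + 1) * qint q (c - int (Suc n))) ((F i ^^ Suc n) u)"
    unfolding Suc coef using assms(1) by (simp add: generator_simps rscale_simps algebra_simps)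
  finally show ?case .
qed

lemma weight_F1: "weight x a b \<Longrightarrow> weight (F 1 x) (a - 2) (b + 1)"
  unfolding weight_def using K_eigen_F[of 1 1] K_eigen_F[of 2 1] by (simp add: cartan_def)

lemma weight_F2: "weight x a b \<Longrightarrow> weight (F 2 x) (a + 1) (b - 2)"
  unfolding weight_def using K_eigen_F[of 1 2] K_eigen_F[of 2 2] by (simp add: cartan_def)

lemma weight_F1_pow: "weight x a b \<Longrightarrow> weight ((F 1 ^^ n) x) (a - 2 * int n) (b + int n)"
  by (induction n) (auto dest: weight_F1 simp: algebra_simps)

lemma weight_F2_pow: "weight x a b \<Longrightarrow> weight ((F 2 ^^ n) x) (a + int n) (b - 2 * int n)"
  by (induction n) (auto dest: weight_F2 simp: algebra_simps)

abbreviation F3 :: "'v \<Rightarrow> 'v" where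
  "F3 \<equiv> F3hat q sc F K Ki"

definition F3_at :: "int \<Rightarrow> 'v \<Rightarrow> 'v" where
  "F3_at b y = rscale (qint q (b + 1)) (F 1 (F 2 y)) - rscale (qint q b) (F 2 (F 1 y))"

lemma F3_at_linear: "F3_at b (rscale c y + rscale d z) = rscale c (F3_at b y) + rscale d (F3_at b z)"
  unfolding F3_at_def by (simp add: generator_simps rscale_simps algebra_simps)

lemma F3_weight:
  assumes "weight x a b"
  shows "F3 x = F3_at b x"
proof -
  have K2: "K 2 x = rscale (q powi b) x" and Ki2: "Ki 2 x = rscale (q powi (- b)) x"
    using assms Ki_eigen[of 2 x b] unfolding weight_def K_eigen_def by simp_all
  have "q * q powi b - inverse q * q powi (- b) = qd q (b + 1)"
    unfolding qd_def using q_nonzero by (simp add: power_int_add power_int_diff power_int_minus field_simps)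
  then have "(q * q powi b - inverse q * q powi (- b)) / (q - inverse q) = qint q (b + 1)"
    unfolding qint_def by simp
  moreover have "(q powi b - q powi (- b)) / (q - inverse q) = qint q b"
    unfolding qint_def qd_def ..
  moreover have "F3 x = rscale ((q * q powi b - inverse q * q powi (- b)) / (q - inverse q)) (F 1 (F 2 x))
     - rscale ((q powi b - q powi (- b)) / (q - inverse q)) (F 2 (F 1 x))"
    unfolding F3hat_def sc_divide_of_real sc_of_real K2 Ki2
    by (simp add: generator_simps rscale_simps diff_divide_distrib mult.commute mult.left_commute)
  ultimately show ?thesis unfolding F3_at_def by simp
qed

lemma weight_F3: "weight x a b \<Longrightarrow> weight (F3 x) (a - 1) (b - 1)"
  using weight_F1[OF weight_F2] weight_F2[OF weight_F1]
  by (simp add: F3_weight F3_at_def weight_def K_eigen_def generator_simps rscale_simps algebra_simps)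

lemma weight_F3_pow: "weight x a b \<Longrightarrow> weight ((F3 ^^ n) x) (a - int n) (b - int n)"
  by (induction n) (auto dest: weight_F3 simp: algebra_simps)

lemma F1_F3_commute:
  assumes "weight x a b"
  shows "F 1 (F3 x) = F3 (F 1 x)"
proof -
  have coef: "qint q (b + 1 + 1) = qint q (b + 1) * (q + inverse q) - qint q b"
    using qint_recurrence[of b] by (simp add: add.assoc mult.commute)
  show ?thesis
    unfolding F3_weight[OF assms] F3_weight[OF weight_F1[OF assms]] F3_at_def coef
    by (simp add: generator_simps F_serre[of 1 2, simplified] rscale_simps algebra_simps)
qed

lemma E2_F3:
  assumes "weight x a b" "E 2 x = 0"
  shows "E 2 (F3 x) = 0"
  unfolding F3_weight[OF assms(1)] F3_at_def
  using E_F_eigen[of 2 x b] E_F_eigen[of 2 "F 1 x" "b + 1"] assms weight_F1[OF assms(1)]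
  by (simp add: weight_def generator_simps E_F_commute rscale_simps algebra_simps)

lemma E1_F3:
  assumes "weight x a b"
  shows "E 1 (F3 x) = rscale (qint q (a + b + 1)) (F 2 x) + F3_at b (E 1 x)"
  unfolding F3_weight[OF assms] F3_at_def qint_add
  using E_F_eigen[of 1 x a] E_F_eigen[of 1 "F 2 x" "a + 1"] assms weight_F2[OF assms]
  by (simp add: weight_def generator_simps E_F_commute rscale_simps algebra_simps)

definition F12_qcomm :: "'v \<Rightarrow> 'v" where
  "F12_qcomm x = F 1 (F 2 x) - rscale q (F 2 (F 1 x))"

lemma F2_F12_qcomm: "F 2 (F12_qcomm x) = rscale q (F12_qcomm (F 2 x))"
  using q_nonzero unfolding F12_qcomm_def
  by (simp add: generator_simps F_serre[of 2 1, simplified] rscale_simps algebra_simps)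

lemma F12_qcomm_F2_pow: "F12_qcomm ((F 2 ^^ k) u) = rscale (q powi (- int k)) ((F 2 ^^ k) (F12_qcomm u))"
proof (induction k)
  case (Suc k)
  have "F12_qcomm (F 2 z) = rscale (inverse q) (F 2 (F12_qcomm z))" for z
    using F2_F12_qcomm[of z] q_nonzero by (simp add: rscale_simps)
  moreover have "q powi (- int (Suc k)) = inverse q * q powi (- int k)"
    using q_nonzero by (simp add: power_int_diff power_int_minus field_simps)
  ultimately show ?case by (simp add: Suc generator_simps rscale_simps)
qed (simp add: rscale_simps)

lemma F1_F2_pow_Suc:
  "F 1 ((F 2 ^^ Suc k) u)
     = rscale (q ^ Suc k) ((F 2 ^^ Suc k) (F 1 u)) + rscale (qint q (int (Suc k))) ((F 2 ^^ k) (F12_qcomm u))"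
proof (induction k)
  case 0
  then show ?case unfolding F12_qcomm_def by (simp add: rscale_simps)
next
  case (Suc k)
  have coef: "qint q (int (Suc (Suc k))) = q powi (- int (Suc k)) + q * qint q (int (Suc k))"
    using qint_succ[of "int (Suc k)"] by (simp add: add.commute)
  have "F 1 ((F 2 ^^ Suc (Suc k)) u) = F12_qcomm ((F 2 ^^ Suc k) u) + rscale q (F 2 (F 1 ((F 2 ^^ Suc k) u)))"
    unfolding F12_qcomm_def by simp
  also have "\<dots> = rscale (q ^ Suc (Suc k)) ((F 2 ^^ Suc (Suc k)) (F 1 u))
      + rscale (qint q (int (Suc (Suc k)))) ((F 2 ^^ Suc k) (F12_qcomm u))"
    unfolding F12_qcomm_F2_pow Suc coef by (simp add: generator_simps rscale_simps algebra_simps)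
  finally show ?case .
qed

lemma F12_qcomm_weight:
  assumes "weight u a b" "qint q (b + 1) \<noteq> 0"
  shows "F12_qcomm u = rscale (1 / qint q (b + 1)) (F3 u)
           - rscale ((qint q (b + 1) * q - qint q b) / qint q (b + 1)) (F 2 (F 1 u))"
  unfolding F3_weight[OF assms(1)] F3_at_def F12_qcomm_def using assms(2)
  by (simp add: rscale_simps algebra_simps diff_divide_distrib)

lemma F1_F2_pow:
  assumes "weight u a b" "qint q (b + 1) \<noteq> 0"
  shows "F 1 ((F 2 ^^ k) u) = rscale (qint q (b + 1 - int k) / qint q (b + 1)) ((F 2 ^^ k) (F 1 u))
           + rscale (qint q (int k) / qint q (b + 1)) ((F 2 ^^ (k - 1)) (F3 u))"
proof (cases k)
  case 0
  then show ?thesis using assms(2) by (simp add: rscale_simps)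
next
  case (Suc j)
  have coef: "q ^ Suc j - qint q (int (Suc j)) * ((qint q (b + 1) * q - qint q b) / qint q (b + 1))
      = qint q (b + 1 - int (Suc j)) / qint q (b + 1)"
    using qint_diff[of "b + 1" "int (Suc j)", unfolded power_int_of_nat] assms(2) by (simp add: field_simps)
  have "F 1 ((F 2 ^^ Suc j) u)
      = rscale (q ^ Suc j - qint q (int (Suc j)) * ((qint q (b + 1) * q - qint q b) / qint q (b + 1)))
          ((F 2 ^^ Suc j) (F 1 u))
        + rscale (qint q (int (Suc j)) / qint q (b + 1)) ((F 2 ^^ j) (F3 u))"
    unfolding F1_F2_pow_Suc F12_qcomm_weight[OF assms]
    by (simp add: F_pow_simps funpow_swap1 rscale_simps algebra_simps)
  then show ?thesis
    unfolding coef Suc by simp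
qed

lemma F3_at_F1_preimage:
  assumes "F 1 y = x" "weight y (a + 2) (b - 1)" "qint q b \<noteq> 0"
  shows "F3_at b y = rscale (qint q (b + 1) / qint q b) (F3 y) - rscale (1 / qint q b) (F 2 x)"
proof -
  have F3y: "F3 y = rscale (qint q b) (F 1 (F 2 y)) - rscale (qint q (b - 1)) (F 2 x)"
    using F3_weight[OF assms(2)] assms(1) unfolding F3_at_def by simp
  have F12: "F 1 (F 2 y) = rscale (1 / qint q b) (F3 y) + rscale (qint q (b - 1) / qint q b) (F 2 x)"
    unfolding F3y using assms(3) by (simp add: rscale_simps algebra_simps)
  have coef: "qint q (b + 1) * (qint q (b - 1) / qint q b) - qint q b = - (1 / qint q b)"
  proof -
    have "qint q (b + 1) * (qint q (b - 1) / qint q b) - qint q b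
        = (qint q (b + 1) * qint q (b - 1) - qint q b * qint q b) / qint q b"
      using assms(3) by (simp add: field_simps)
    then show ?thesis
      unfolding qint_square by simp
  qed
  have "F3_at b y = rscale (qint q (b + 1) / qint q b) (F3 y)
      + rscale (qint q (b + 1) * (qint q (b - 1) / qint q b) - qint q b) (F 2 x)"
    unfolding F3_at_def F12 assms(1)[symmetric] by (simp add: generator_simps rscale_simps algebra_simps)
  then show ?thesis
    unfolding coef by (simp add: rscale_simps)
qed

lemma F3_at_F2:
  assumes "F3 y = x" "weight y (a + 1) (b + 1)" "qint q (b + 2) \<noteq> 0"
  shows "F3_at b (F 2 y) = F 2 x"
proof -
  have nz: "qint q (b + 1 + 1) \<noteq> 0" using assms(3) by (simp add: add.assoc)
  have F12: "F 1 (F 2 y) = rscale (qint q (b + 1) / qint q (b + 2)) (F 2 (F 1 y)) + rscale (1 / qint q (b + 2)) x"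
    using F1_F2_pow[OF assms(2) nz, of 1] assms(1) by (simp add: add.assoc One_nat_def add.commute)
  have F122: "F 1 (F 2 (F 2 y))
      = rscale (qint q b / qint q (b + 2)) (F 2 (F 2 (F 1 y))) + rscale (qint q 2 / qint q (b + 2)) (F 2 x)"
    using F1_F2_pow[OF assms(2) nz, of 2] assms(1) by (simp add: add.assoc numeral_2_eq_2)
  have "(qint q (b + 1) * qint q 2 - qint q b) / qint q (b + 2) = 1"
    using qint_recurrence[of b] assms(3) by (simp add: qint_2 mult.commute)
  moreover have "F3_at b (F 2 y) = rscale ((qint q (b + 1) * qint q 2 - qint q b) / qint q (b + 2)) (F 2 x)"
    unfolding F3_at_def F12 F122 by (simp add: generator_simps rscale_simps algebra_simps diff_divide_distrib)
  ultimately show ?thesis by (simp add: rscale_simps)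
qed

end

section \<open>Highest weight modules\<close>

locale Uq_su3_highest_weight = Uq_su3_module q sc E F K Ki
  for q :: real and sc :: "complex \<Rightarrow> 'v::ab_group_add \<Rightarrow> 'v" and E F K Ki :: "nat \<Rightarrow> 'v \<Rightarrow> 'v" +
  fixes v :: 'v and l1 l2 :: nat
  assumes E1_v: "E 1 v = 0" and E2_v: "E 2 v = 0"
    and K1_v: "K 1 v = sc (complex_of_real q ^ l1) v" and K2_v: "K 2 v = sc (complex_of_real q ^ l2) v"
begin

definition vlm :: "nat \<Rightarrow> nat \<Rightarrow> 'v" where
  "vlm l m = (F3 ^^ l) ((F 1 ^^ m) v)"

lemma vkl_eq: "vkl q sc F K Ki v k l m = (F 2 ^^ k) (vlm l m)"
  unfolding vkl_def vlm_def ..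

lemma weight_v: "weight v (int l1) (int l2)"
  using K1_v K2_v unfolding weight_def K_eigen_def rscale_def by (simp add: power_int_of_nat)

lemma weight_vlm: "weight (vlm l m) (int l1 - int l - 2 * int m) (int l2 - int l + int m)"
  unfolding vlm_def using weight_F3_pow[OF weight_F1_pow[OF weight_v, of m], of l] by (simp add: algebra_simps)

lemma F3_vlm: "F3 (vlm l m) = vlm (Suc l) m"
  unfolding vlm_def by simp

lemma F1_vlm: "F 1 (vlm l m) = vlm l (Suc m)"
proof -
  have commute: "F 1 ((F3 ^^ l) y) = (F3 ^^ l) (F 1 y)" if "weight y a b" for y a b
    by (induction l) (simp_all add: F1_F3_commute[OF weight_F3_pow[OF that]])
  show ?thesis
    unfolding vlm_def using commute[OF weight_F1_pow[OF weight_v]] by simp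
qed

lemma E2_vlm: "E 2 (vlm l m) = 0"
proof -
  have "E 2 ((F 1 ^^ m) v) = 0"
    by (induction m) (simp_all add: E2_v E_F_commute generator_simps)
  then show ?thesis
    unfolding vlm_def by (induction l) (simp_all add: E2_F3[OF weight_F3_pow[OF weight_F1_pow[OF weight_v]]])
qed

text \<open>The coefficient factors vanish exactly when \<open>m = 0\<close> resp. \<open>l = 0\<close>, where the truncated
  subtraction \<open>m - 1\<close> resp. \<open>l - 1\<close> would make the bare vector identities false.\<close>

lemma rscale_alpha_F3_at:
  fixes k l m :: nat
  assumes "l < l2"
  defines "b \<equiv> int l2 - int l + int m"
  shows "rscale (coef_alpha q l1 l2 k l m) (F3_at b (vlm l (m - 1)))
       = rscale (coef_alpha q l1 l2 k l m)
           (rscale (qint q (b + 1) / qint q b) (vlm (Suc l) (m - 1)) - rscale (1 / qint q b) (F 2 (vlm l m)))"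
proof (cases m)
  case (Suc j)
  have wt: "weight (vlm l j) (int l1 - int l - 2 * int m + 2) (b - 1)"
    using weight_vlm[of l j] unfolding b_def Suc by (simp add: algebra_simps)
  have "qint q b \<noteq> 0"
    using assms(1) unfolding b_def by (intro qint_nonzero) simp
  then show ?thesis
    using F3_at_F1_preimage[OF F1_vlm wt] F3_vlm unfolding Suc by simp
qed (simp add: rscale_simps)

lemma rscale_beta_F3_at:
  fixes k l m :: nat
  assumes "l < l2"
  defines "b \<equiv> int l2 - int l + int m"
  shows "rscale (coef_beta q l1 l2 k l m) (F3_at b (F 2 (vlm (l - 1) m)))
       = rscale (coef_beta q l1 l2 k l m) (F 2 (vlm l m))"
proof (cases l)
  case (Suc i)
  have wt: "weight (vlm i m) (int l1 - int l - 2 * int m + 1) (b + 1)"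
    using weight_vlm[of i m] unfolding b_def Suc by (simp add: algebra_simps)
  have "qint q (b + 2) \<noteq> 0"
    using assms(1) unfolding b_def by (intro qint_nonzero) simp
  then show ?thesis
    using F3_at_F2[OF F3_vlm wt] unfolding Suc by simp
qed (simp add: rscale_simps)

text \<open>\<open>coef_alpha\<close> and \<open>coef_beta\<close> ignore their \<open>k\<close> argument; it is left free here.\<close>

lemma E1_vlm:
  "l \<le> l2 \<Longrightarrow> E 1 (vlm l m)
     = rscale (coef_alpha q l1 l2 k l m) (vlm l (m - 1)) + rscale (coef_beta q l1 l2 k l m) (F 2 (vlm (l - 1) m))"
proof (induction l)
  case 0
  show ?case
  proof (cases m)
    case (Suc j)
    then show ?thesis
      unfolding vlm_def using E_F_pow_Suc[of 1 v "int l1" j] weight_v E1_v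
      by (simp add: weight_def coef_alpha_base rscale_simps)
  qed (simp add: vlm_def E1_v rscale_simps)
next
  case (Suc l)
  define a where "a = int l1 - int l - 2 * int m"
  define b where "b = int l2 - int l + int m"
  have l: "l < l2" using Suc.prems by simp
  have "E 1 (vlm (Suc l) m) = E 1 (F3 (vlm l m))"
    by (simp add: F3_vlm)
  also have "\<dots> = rscale (qint q (a + b + 1)) (F 2 (vlm l m)) + F3_at b (E 1 (vlm l m))"
    using E1_F3 weight_vlm unfolding a_def b_def by blast
  also have "\<dots> = rscale (qint q (a + b + 1)) (F 2 (vlm l m))
      + rscale (coef_alpha q l1 l2 k l m) (F3_at b (vlm l (m - 1)))
      + rscale (coef_beta q l1 l2 k l m) (F3_at b (F 2 (vlm (l - 1) m)))"
    using Suc.IH l F3_at_linear by (simp add: add.assoc)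
  also have "\<dots> = rscale (coef_alpha q l1 l2 k (Suc l) m) (vlm (Suc l) (m - 1))
      + rscale (coef_beta q l1 l2 k (Suc l) m) (F 2 (vlm (Suc l - 1) m))"
    unfolding b_def rscale_alpha_F3_at[OF l] rscale_beta_F3_at[OF l]
      coef_alpha_Suc[OF l] coef_beta_Suc[OF l] a_def
    by (simp add: rscale_simps generator_simps algebra_simps)
  finally show ?case .
qed

lemma weight_vkl:
  "weight (vkl q sc F K Ki v k l m) (int l1 + int k - int l - 2 * int m) (int l2 - 2 * int k - int l + int m)"
  unfolding vkl_eq using weight_F2_pow[OF weight_vlm[of l m], of k] by (simp add: algebra_simps)

lemma K1_vkl:
  "K 1 (vkl q sc F K Ki v k l m)
     = sc (complex_of_real q powi (int l1 + int k - int l - 2 * int m)) (vkl q sc F K Ki v k l m)"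
  using weight_vkl unfolding weight_def K_eigen_def rscale_def by simp

lemma K2_vkl:
  "K 2 (vkl q sc F K Ki v k l m)
     = sc (complex_of_real q powi (int l2 - 2 * int k - int l + int m)) (vkl q sc F K Ki v k l m)"
  using weight_vkl unfolding weight_def K_eigen_def rscale_def by simp

lemma F2_vkl: "F 2 (vkl q sc F K Ki v k l m) = vkl q sc F K Ki v (k + 1) l m"
  unfolding vkl_eq by (simp add: One_nat_def)

lemma F1_vkl:
  assumes "l \<le> l2"
  shows "F 1 (vkl q sc F K Ki v k l m)
     = sc (complex_of_real (coef_a q l1 l2 k l m)) (vkl q sc F K Ki v k l (m + 1))
       + sc (complex_of_real (coef_b q l1 l2 k l m)) (vkl q sc F K Ki v (k - 1) (l + 1) m)"
proof -
  define b where "b = int l2 - int l + int m"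
  have nz: "qint q (b + 1) \<noteq> 0"
    using assms unfolding b_def by (intro qint_nonzero) simp
  have e: "int l2 + int m + 1 - int k - int l = b + 1 - int k" "int l2 + int m + 1 - int l = b + 1"
    unfolding b_def by simp_all
  have "coef_a q l1 l2 k l m = qint q (b + 1 - int k) / qint q (b + 1)"
    "coef_b q l1 l2 k l m = qint q (int k) / qint q (b + 1)"
    unfolding coef_a_def coef_b_def qint_eq_qd_div e using qd_1_nonzero by simp_all
  then show ?thesis
    unfolding vkl_eq sc_of_real F1_F2_pow[OF weight_vlm[of l m, folded b_def] nz] F1_vlm F3_vlm
    by (simp add: One_nat_def)
qed

lemma E1_vkl:
  assumes "l \<le> l2"
  shows "E 1 (vkl q sc F K Ki v k l m)
     = sc (complex_of_real (coef_alpha q l1 l2 k l m)) (vkl q sc F K Ki v k l (m - 1))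
       + sc (complex_of_real (coef_beta q l1 l2 k l m)) (vkl q sc F K Ki v (k + 1) (l - 1) m)"
  unfolding vkl_eq sc_of_real E_F_pow_commute[of 1 2, simplified] E1_vlm[OF assms, where k = k]
  by (simp add: F_pow_simps funpow_swap1 One_nat_def)

lemma E2_vkl:
  "E 2 (vkl q sc F K Ki v k l m)
     = sc (complex_of_real (coef_eta q l1 l2 k l m)) (vkl q sc F K Ki v (k - 1) l m)"
proof (cases k)
  case 0
  then show ?thesis
    unfolding vkl_eq coef_eta_def by (simp add: E2_vlm sc_of_real rscale_simps)
next
  case (Suc j)
  define b where "b = int l2 - int l + int m"
  have e: "1 - int k + int l2 - int l + int m = b - int j" "int k = int j + 1"
    unfolding b_def Suc by simp_all
  have "coef_eta q l1 l2 k l m = qint q (int j + 1) * qint q (b - int j)"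
    unfolding coef_eta_def qint_def e(1) unfolding e(2) by simp
  moreover have "K_eigen 2 (vlm l m) b"
    using weight_vlm unfolding weight_def b_def by blast
  ultimately show ?thesis
    unfolding vkl_eq sc_of_real Suc using E_F_pow_Suc[of 2 "vlm l m" b j] E2_vlm by simp
qed

end

theorem proposition2p4:
  fixes q :: real and l1 l2 :: nat
    and sc :: "complex \<Rightarrow> 'v::ab_group_add \<Rightarrow> 'v"
    and E F K Ki :: "nat \<Rightarrow> 'v \<Rightarrow> 'v" and v :: 'v
  assumes q: "0 < q" "q < 1"
    and rep: "Uq_su3_rep q sc E F K Ki"
    and fd: "fin_dim sc"
    and irr: "irreducible_rep sc E F K Ki"
    and hw: "v \<noteq> 0" "E 1 v = 0" "E 2 v = 0"
      "K 1 v = sc (complex_of_real q ^ l1) v" "K 2 v = sc (complex_of_real q ^ l2) v"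
    and km: "m \<le> l1" "l \<le> l2" "k \<le> l2 + m - l"
  shows
    "K 1 (vkl q sc F K Ki v k l m)
       = sc (complex_of_real q powi (int l1 + int k - int l - 2 * int m)) (vkl q sc F K Ki v k l m)
     \<and> K 2 (vkl q sc F K Ki v k l m)
       = sc (complex_of_real q powi (int l2 - 2 * int k - int l + int m)) (vkl q sc F K Ki v k l m)
     \<and> F 1 (vkl q sc F K Ki v k l m)
       = sc (complex_of_real (coef_a q l1 l2 k l m)) (vkl q sc F K Ki v k l (m + 1))
         + sc (complex_of_real (coef_b q l1 l2 k l m)) (vkl q sc F K Ki v (k - 1) (l + 1) m)
     \<and> E 1 (vkl q sc F K Ki v k l m)
       = sc (complex_of_real (coef_alpha q l1 l2 k l m)) (vkl q sc F K Ki v k l (m - 1))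
         + sc (complex_of_real (coef_beta q l1 l2 k l m)) (vkl q sc F K Ki v (k + 1) (l - 1) m)
     \<and> F 2 (vkl q sc F K Ki v k l m) = vkl q sc F K Ki v (k + 1) l m
     \<and> E 2 (vkl q sc F K Ki v k l m)
       = sc (complex_of_real (coef_eta q l1 l2 k l m)) (vkl q sc F K Ki v (k - 1) l m)"
proof -
  interpret Uq_su3_highest_weight q sc E F K Ki v l1 l2
    using q rep hw by unfold_locales auto
  show ?thesis
    using K1_vkl K2_vkl F1_vkl[OF km(2)] E1_vkl[OF km(2)] F2_vkl E2_vkl by blast
qed

end
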